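(* Let $A=aH-\sum_{i=1}^{10}b_iE_i\in H_2(\mathbb{CP}^2\#10\overline{\mathbb{CP}^2};\mathbb Z)$ be a reduced class with $A\cdot A=-4$, $K_{st}\cdot A=2$ and $b_{10}=2$. Then $A=-a'(-3H+\sum_{i=1}^9E_i)-2E_{10}$ for some integer $a'\ge2$.
   Context: $\{H,E_1,\dots,E_{10}\}$ is the standard basis ($H^2=1$, $E_i^2=-1$, pairwise orthogonal), $K_{st}=-3H+\sum_{i=1}^{10}E_i$. A class $aH-\sum b_iE_i$ is reduced if $b_1\ge\cdots\ge b_{10}\ge0$ and $a\ge b_1+b_2+b_3$. *)

theory Defs
  imports Main
begin

text \<open>A class a H - sum_{i=1}^{10} b_i E_i in H_2(CP^2 # 10 (-CP^2); Z) is represented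
  by the pair (a, b) with b :: nat => int; only the values b 1, ..., b 10 matter.\<close>

type_synonym hclass = "int \<times> (nat \<Rightarrow> int)"

definition mkclass :: "int \<Rightarrow> (nat \<Rightarrow> int) \<Rightarrow> hclass" where
  "mkclass a b = (a, (\<lambda>i. if i \<in> {1..10} then b i else 0))"

definition cdot :: "hclass \<Rightarrow> hclass \<Rightarrow> int" where
  "cdot A B = fst A * fst B - (\<Sum>i=1..10. snd A i * snd B i)"

definition Kst :: hclass where
  "Kst = mkclass (-3) (\<lambda>_. -1)"

definition reduced :: "hclass \<Rightarrow> bool" where
  "reduced A = ((\<forall>i\<in>{1..9}. snd A i \<ge> snd A (Suc i)) \<and> snd A 10 \<ge> 0
     \<and> fst A \<ge> snd A 1 + snd A 2 + snd A 3)"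

end

theory Submission
  imports Defs
begin

text \<open>
  Since b_10 = 2, the conditions A\<cdot>A = -4 and
  K_st\<cdot>A = 2 reduce to  \<Sum>_{i\<le>9} b_i^2 = a^2  and  \<Sum>_{i\<le>9} b_i = 3a.  Hence
  9 \<Sum> b_i^2 = (\<Sum> b_i)^2, which is the equality case of the Cauchy-Schwarz inequality
  for nine numbers: all b_i (i \<le> 9) are equal to a/3.  Putting a' = b_1 gives the claimed
  shape, and a' = b_9 \<ge> b_10 = 2 by reducedness.
\<close>

lemma sum_squared_deviations:
  fixes x :: "'i \<Rightarrow> int"
  assumes "finite I"
  shows "(\<Sum>i\<in>I. (int (card I) * x i - sum x I)^2)
           = int (card I) * (int (card I) * (\<Sum>i\<in>I. (x i)^2) - (sum x I)^2)"
proof -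
  define n s where "n = int (card I)" and "s = sum x I"
  have "(\<Sum>i\<in>I. (n * x i - s)^2) = (\<Sum>i\<in>I. n^2 * (x i)^2 - 2 * n * s * x i + s^2)"
    by (rule sum.cong) (simp_all add: power2_eq_square algebra_simps)
  also have "\<dots> = n^2 * (\<Sum>i\<in>I. (x i)^2) - 2 * n * s * sum x I + int (card I) * s^2"
    by (simp add: sum.distrib sum_subtractf sum_distrib_left)
  also have "\<dots> = n^2 * (\<Sum>i\<in>I. (x i)^2) - 2 * n * s * s + n * s^2"
    by (simp only: n_def s_def)
  also have "\<dots> = n * (n * (\<Sum>i\<in>I. (x i)^2) - s^2)"
    by (simp add: power2_eq_square algebra_simps)
  finally show ?thesis by (simp add: n_def s_def)
qed

lemma cauchy_schwarz_equality_int: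
  fixes x :: "'i \<Rightarrow> int"
  assumes "finite I"
    and "int (card I) * (\<Sum>i\<in>I. (x i)^2) = (sum x I)^2"
    and "j \<in> I"
  shows "int (card I) * x j = sum x I"
proof -
  have "(\<Sum>i\<in>I. (int (card I) * x i - sum x I)^2) = 0"
    using sum_squared_deviations[OF assms(1), of x] assms(2) by simp
  hence "(int (card I) * x j - sum x I)^2 = 0"
    using sum_nonneg_eq_0_iff[OF assms(1), of "\<lambda>i. (int (card I) * x i - sum x I)^2"] assms(3)
    by simp
  thus ?thesis by simp
qed

lemma cdot_mkclass_self:
  "cdot (mkclass a b) (mkclass a b) = a^2 - (\<Sum>i=1..10. (b i)^2)"
  unfolding cdot_def mkclass_def by (simp add: power2_eq_square)

lemma cdot_Kst_mkclass:
  "cdot Kst (mkclass a b) = -3 * a + (\<Sum>i=1..10. b i)"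
  unfolding cdot_def Kst_def mkclass_def by (simp add: sum_negf)

lemma sum_upto_10:
  fixes f :: "nat \<Rightarrow> int"
  shows "(\<Sum>i=1..10. f i) = (\<Sum>i=1..9. f i) + f 10"
  by (simp add: sum.cl_ivl_Suc numeral_eq_Suc)

lemma reduced_mkclass_last:
  assumes "reduced (mkclass a b)"
  shows "b 10 \<le> b 9"
proof -
  have decreasing: "\<forall>i\<in>{1..9}. snd (mkclass a b) (Suc i) \<le> snd (mkclass a b) i"
    using assms unfolding reduced_def by (rule conjunct1)
  have "snd (mkclass a b) (Suc 9) \<le> snd (mkclass a b) 9"
    using decreasing by (rule bspec) simp
  thus ?thesis by (simp add: mkclass_def)
qed

lemma mkclass_cong:
  assumes "\<And>i. i \<in> {1..10} \<Longrightarrow> b i = c i"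
  shows "mkclass a b = mkclass a c"
  unfolding mkclass_def using assms by (simp add: fun_eq_iff)

theorem lemma5p7:
  fixes a :: int and b :: "nat \<Rightarrow> int"
  defines "A \<equiv> mkclass a b"
  assumes "reduced A"
    and "cdot A A = -4"
    and "cdot Kst A = 2"
    and "b 10 = 2"
  shows "\<exists>a'::int. a' \<ge> 2 \<and>
    A = mkclass (3 * a') (\<lambda>i. if i \<le> 9 then a' else 2)"
proof -
  have squares: "(\<Sum>i=1..9. (b i)^2) = a^2"
    using assms(3,5) unfolding A_def cdot_mkclass_self sum_upto_10 by simp
  have total: "(\<Sum>i=1..9. b i) = 3 * a"
    using assms(4,5) unfolding A_def cdot_Kst_mkclass sum_upto_10 by simp
  have mean: "3 * b i = a" if "i \<in> {1..9}" for i
    using cauchy_schwarz_equality_int[of "{1..9::nat}" b i] that squares total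
    by (simp add: power2_eq_square)
  have "b 1 \<ge> 2"
    using reduced_mkclass_last[of a b] assms(2,5) mean[of 1] mean[of 9]
    unfolding A_def by simp
  moreover have "A = mkclass (3 * b 1) (\<lambda>i. if i \<le> 9 then b 1 else 2)"
  proof -
    have shape: "b i = (if i \<le> 9 then b 1 else 2)" if "i \<in> {1..10}" for i
    proof (cases "i = 10")
      case True
      thus ?thesis using assms(5) by simp
    next
      case False
      hence "i \<in> {1..9}" using that by auto
      thus ?thesis using mean[of i] mean[of 1] by simp
    qed
    have "a = 3 * b 1" using mean[of 1] by simp
    thus ?thesis unfolding A_def by (simp only:) (rule mkclass_cong, erule shape)
  qed
  ultimately show ?thesis by blast
qed

end
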